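(* Let $A$ be a finite set of options and consider $V\ge1$ votes, each a truncated ranking with possible ties, interpreted as in the context, with Llull matrix $v$. Let $T$ be the set of path-top choices of $v$. If $x,y\in A$, $x$ dominates $y$ in the sense of Pareto, and $y\in T$, then $x\in T$.
   Context: A truncated ranking with ties is a weak order on a subset of $A$ (the ranked options); for ranked options, $x$ is preferred to $y$ if strictly above, and ranked equally if tied; every ranked option is preferred to every unranked option; two unranked options are not compared. Llull matrix: $v_{xy}=(\#\{\text{votes preferring }x\text{ to }y\}+\tfrac12\#\{\text{votes ranking }x,y\text{ equally}\})/V$. Path scores: $v^*_{xy}=\max\min(v_{x_0x_1},\dots,v_{x_{m-1}x_m})$ over all paths $x_0\dots x_m$ ($m\ge1$, $x_0=x$, $x_m=y$, $x_i$ pairwise distinct). Ranking relation: $x\succeq y$ iff there is a path $x_0\dots x_m$ from $x$ to $y$ with $v^*_{x_ix_{i+1}}\ge v^*_{x_{i+1}x_i}$ for all $i<m$. $x$ is a path-top choice if $x\succeq z$ for all $z\ne x$. $x$ dominates $y$ in the sense of Pareto if every vote either prefers $x$ to $y$ or ranks them equally, and at least one vote prefers $x$ to $y$. *)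

theory Defs
  imports Complex_Main
begin

text \<open>A vote (truncated ranking with ties) is a relation R on options: (x,y) in R means
 x is ranked at least as high as y.\<close>

definition ranked :: "('a \<times> 'a) set \<Rightarrow> 'a set" where
  "ranked R = {x. (x, x) \<in> R}"

definition truncated_ranking :: "'a set \<Rightarrow> ('a \<times> 'a) set \<Rightarrow> bool" where
  "truncated_ranking A R \<longleftrightarrow> ranked R \<subseteq> A \<and> R \<subseteq> ranked R \<times> ranked R
     \<and> refl_on (ranked R) R \<and> trans R \<and> total_on (ranked R) R"

definition prefers :: "('a \<times> 'a) set \<Rightarrow> 'a \<Rightarrow> 'a \<Rightarrow> bool" where
  "prefers R x y \<longleftrightarrow>
     (x \<in> ranked R \<and> y \<in> ranked R \<and> (x, y) \<in> R \<and> (y, x) \<notin> R)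
     \<or> (x \<in> ranked R \<and> y \<notin> ranked R)"

definition ties :: "('a \<times> 'a) set \<Rightarrow> 'a \<Rightarrow> 'a \<Rightarrow> bool" where
  "ties R x y \<longleftrightarrow> x \<in> ranked R \<and> y \<in> ranked R \<and> (x, y) \<in> R \<and> (y, x) \<in> R"

definition llull :: "('a \<times> 'a) set list \<Rightarrow> 'a \<Rightarrow> 'a \<Rightarrow> real" where
  "llull vs x y = (real (length (filter (\<lambda>R. prefers R x y) vs))
      + real (length (filter (\<lambda>R. ties R x y) vs)) / 2) / real (length vs)"

definition is_path :: "'a set \<Rightarrow> 'a list \<Rightarrow> 'a \<Rightarrow> 'a \<Rightarrow> bool" where
  "is_path A xs x y \<longleftrightarrow> length xs \<ge> 2 \<and> distinct xs \<and> set xs \<subseteq> A \<and> hd xs = x \<and> last xs = y"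

definition path_strength :: "('a \<Rightarrow> 'a \<Rightarrow> real) \<Rightarrow> 'a list \<Rightarrow> real" where
  "path_strength v xs = Min {v (xs ! i) (xs ! Suc i) | i. Suc i < length xs}"

definition path_score :: "'a set \<Rightarrow> ('a \<Rightarrow> 'a \<Rightarrow> real) \<Rightarrow> 'a \<Rightarrow> 'a \<Rightarrow> real" where
  "path_score A v x y = Max {path_strength v xs | xs. is_path A xs x y}"

definition ranks_geq :: "'a set \<Rightarrow> ('a \<Rightarrow> 'a \<Rightarrow> real) \<Rightarrow> 'a \<Rightarrow> 'a \<Rightarrow> bool" where
  "ranks_geq A v x y \<longleftrightarrow> (\<exists>xs. is_path A xs x y \<and>
     (\<forall>i. Suc i < length xs \<longrightarrow>
        path_score A v (xs ! i) (xs ! Suc i) \<ge> path_score A v (xs ! Suc i) (xs ! i)))"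

definition path_top_choices :: "'a set \<Rightarrow> ('a \<Rightarrow> 'a \<Rightarrow> real) \<Rightarrow> 'a set" where
  "path_top_choices A v = {x \<in> A. \<forall>z \<in> A. z \<noteq> x \<longrightarrow> ranks_geq A v x z}"

definition pareto_dominates :: "('a \<times> 'a) set list \<Rightarrow> 'a \<Rightarrow> 'a \<Rightarrow> bool" where
  "pareto_dominates vs x y \<longleftrightarrow> (\<forall>R \<in> set vs. prefers R x y \<or> ties R x y)
     \<and> (\<exists>R \<in> set vs. prefers R x y)"

end

(* Pareto dominance of x over y makes every vote at least as favourable to x as to y against
   any third option, so v(y,z) \<le> v(x,z), v(z,x) \<le> v(z,y) and v(y,x) \<le> v(x,y). Exchanging
   x and y in a strongest path from y to x therefore yields a path from x to y that is at least
   as strong, whence v*(x,y) \<ge> v*(y,x). Thus x \<succeq> y, and prefixing x to the paths witnessing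
   y \<succeq> z (cutting at x if it already occurs) gives x \<succeq> z for every z. *)

theory Submission
  imports Defs
begin

definition weakly_prefers :: "('a \<times> 'a) set \<Rightarrow> 'a \<Rightarrow> 'a \<Rightarrow> bool" where
  "weakly_prefers R a b \<longleftrightarrow> prefers R a b \<or> ties R a b"

definition vote_score :: "('a \<times> 'a) set \<Rightarrow> 'a \<Rightarrow> 'a \<Rightarrow> real" where
  "vote_score R a b = (if prefers R a b then 1 else if ties R a b then 1/2 else 0)"

lemma weakly_prefers_iff:
  "weakly_prefers R a b \<longleftrightarrow> a \<in> ranked R \<and> (b \<in> ranked R \<longrightarrow> (a, b) \<in> R)"
  unfolding weakly_prefers_def prefers_def ties_def by blast

lemma truncated_ranking_total:
  assumes "truncated_ranking A R" "a \<in> ranked R" "b \<in> ranked R"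
  shows "(a, b) \<in> R \<or> (b, a) \<in> R"
proof (cases "a = b")
  case True
  then show ?thesis
    using assms(2) by (simp add: ranked_def)
next
  case False
  then show ?thesis
    using assms unfolding truncated_ranking_def total_on_def by blast
qed

lemma prefers_iff:
  assumes "truncated_ranking A R"
  shows "prefers R a b \<longleftrightarrow> a \<in> ranked R \<and> (b \<in> ranked R \<longrightarrow> (b, a) \<notin> R)"
  unfolding prefers_def using truncated_ranking_total[OF assms, of a b] by blast

lemma weakly_prefers_trans:
  assumes "truncated_ranking A R" "weakly_prefers R a b" "weakly_prefers R b c"
  shows "weakly_prefers R a c"
  using assms transD[of R] unfolding truncated_ranking_def weakly_prefers_iff by blast

lemma prefers_weakly_prefers_trans:
  assumes "truncated_ranking A R" "prefers R a b" "weakly_prefers R b c"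
  shows "prefers R a c"
  using assms transD[of R] unfolding truncated_ranking_def prefers_iff[OF assms(1)] weakly_prefers_iff
  by blast

lemma weakly_prefers_prefers_trans:
  assumes "truncated_ranking A R" "weakly_prefers R a b" "prefers R b c"
  shows "prefers R a c"
  using assms transD[of R] unfolding truncated_ranking_def prefers_iff[OF assms(1)] weakly_prefers_iff
  by blast

lemma prefers_not_weakly_prefers:
  assumes "truncated_ranking A R" "prefers R a b"
  shows "\<not> weakly_prefers R b a"
  using assms unfolding prefers_iff[OF assms(1)] weakly_prefers_iff by blast

lemma vote_score_le:
  assumes "prefers R a b \<Longrightarrow> prefers R c d" and "ties R a b \<Longrightarrow> weakly_prefers R c d"
  shows "vote_score R a b \<le> vote_score R c d"
  using assms unfolding vote_score_def weakly_prefers_def by auto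

lemma vote_score_weakly_preferred:
  assumes "truncated_ranking A R" "weakly_prefers R x y"
  shows "vote_score R y z \<le> vote_score R x z"
    and "vote_score R z x \<le> vote_score R z y"
    and "vote_score R y x \<le> vote_score R x y"
proof -
  have ties_weakly: "ties R a b \<Longrightarrow> weakly_prefers R a b" for a b
    unfolding weakly_prefers_def by blast
  show "vote_score R y z \<le> vote_score R x z"
  proof (rule vote_score_le)
    show "prefers R x z" if "prefers R y z"
      using weakly_prefers_prefers_trans[OF assms that] .
    show "weakly_prefers R x z" if "ties R y z"
      using weakly_prefers_trans[OF assms ties_weakly[OF that]] .
  qed
  show "vote_score R z x \<le> vote_score R z y"
  proof (rule vote_score_le)
    show "prefers R z y" if "prefers R z x"
      using prefers_weakly_prefers_trans[OF assms(1) that assms(2)] .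
    show "weakly_prefers R z y" if "ties R z x"
      using weakly_prefers_trans[OF assms(1) ties_weakly[OF that] assms(2)] .
  qed
  show "vote_score R y x \<le> vote_score R x y"
  proof (rule vote_score_le)
    show "prefers R x y" if "prefers R y x"
      using prefers_not_weakly_prefers[OF assms(1) that] assms(2) by contradiction
    show "weakly_prefers R x y" if "ties R y x"
      using that unfolding ties_def weakly_prefers_def by blast
  qed
qed

lemma llull_eq_average:
  "llull vs a b = (\<Sum>R\<leftarrow>vs. vote_score R a b) / real (length vs)"
proof -
  have count: "real (length (filter P vs)) + real (length (filter Q vs)) / 2
      = (\<Sum>R\<leftarrow>vs. if P R then 1 else if Q R then 1/2 else 0)"
    if "\<And>R. \<not> (P R \<and> Q R)" for P Q :: "('a \<times> 'a) set \<Rightarrow> bool"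
    using that by (induction vs) (auto simp: field_simps)
  have exclusive: "\<not> (prefers R a b \<and> ties R a b)" for R
    unfolding prefers_def ties_def by blast
  show ?thesis
    unfolding llull_def vote_score_def count[OF exclusive] ..
qed

lemma llull_mono:
  assumes "\<And>R. R \<in> set vs \<Longrightarrow> vote_score R a b \<le> vote_score R c d"
  shows "llull vs a b \<le> llull vs c d"
  unfolding llull_eq_average
  by (intro divide_right_mono sum_list_mono assms) simp_all

lemma llull_pareto_dominates:
  assumes "\<forall>R \<in> set vs. truncated_ranking A R" "pareto_dominates vs x y"
  shows "llull vs y z \<le> llull vs x z"
    and "llull vs z x \<le> llull vs z y"
    and "llull vs y x \<le> llull vs x y"
proof -
  have "truncated_ranking A R" "weakly_prefers R x y" if "R \<in> set vs" for R
    using assms that unfolding pareto_dominates_def weakly_prefers_def by auto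
  then show "llull vs y z \<le> llull vs x z" "llull vs z x \<le> llull vs z y"
      "llull vs y x \<le> llull vs x y"
    by (meson llull_mono vote_score_weakly_preferred)+
qed

lemma finite_paths:
  assumes "finite A"
  shows "finite {xs. is_path A xs a b}"
proof (rule finite_subset[OF _ finite_lists_length_le[OF assms, of "card A"]])
  show "{xs. is_path A xs a b} \<subseteq> {xs. set xs \<subseteq> A \<and> length xs \<le> card A}"
    using assms by (auto simp: is_path_def dest!: distinct_card[symmetric] intro: card_mono)
qed

lemma path_strength_le_path_score:
  assumes "finite A" "is_path A xs a b"
  shows "path_strength v xs \<le> path_score A v a b"
  unfolding path_score_def using finite_paths[OF assms(1), of a b] assms(2)
  by (intro Max_ge) auto

lemma path_score_attained:
  assumes "finite A" "is_path A xs a b"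
  obtains ys where "is_path A ys a b" "path_score A v a b = path_strength v ys"
proof -
  have "path_score A v a b \<in> {path_strength v xs | xs. is_path A xs a b}"
    unfolding path_score_def using finite_paths[OF assms(1), of a b] assms(2)
    by (intro Max_in) auto
  then show ?thesis
    using that by blast
qed

lemma finite_path_edges: "finite {v (xs ! i) (xs ! Suc i) | i. Suc i < length xs}"
  by (rule finite_image_set) (rule finite_subset[of _ "{..<length xs}"], auto)

lemma path_strength_le_edge:
  assumes "Suc i < length xs"
  shows "path_strength v xs \<le> v (xs ! i) (xs ! Suc i)"
  unfolding path_strength_def using assms by (intro Min_le finite_path_edges) auto

lemma path_strength_greatest:
  assumes "length xs \<ge> 2" "\<And>i. Suc i < length xs \<Longrightarrow> c \<le> v (xs ! i) (xs ! Suc i)"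
  shows "c \<le> path_strength v xs"
  unfolding path_strength_def
proof (rule Min.boundedI[OF finite_path_edges])
  show "{v (xs ! i) (xs ! Suc i) |i. Suc i < length xs} \<noteq> {}"
    using assms(1) by (auto intro!: exI[of _ 0])
qed (use assms(2) in blast)

lemma path_score_swap_le:
  fixes v :: "'a \<Rightarrow> 'a \<Rightarrow> real"
  assumes "finite A" "x \<in> A" "y \<in> A" "x \<noteq> y"
    and "\<And>z. v y z \<le> v x z" "\<And>z. v z x \<le> v z y" "v y x \<le> v x y"
  shows "path_score A v y x \<le> path_score A v x y"
proof -
  have "is_path A [y, x] y x"
    using assms(2-4) by (simp add: is_path_def)
  then obtain ps where ps: "is_path A ps y x" "path_score A v y x = path_strength v ps"
    using path_score_attained[OF assms(1)] by blast
  \<comment> \<open>Swapping the endpoints of an optimal path from y to x; its interior avoids x and y.\<close>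
  define \<sigma> where "\<sigma> = id(x := y, y := x)"
  define qs where "qs = map \<sigma> ps"
  have "ps = butlast ps @ [x]" "ps = y # tl ps" and "distinct ps"
    using ps(1) unfolding is_path_def
    by (metis append_butlast_last_id list.collapse list.size(3) not_numeral_le_zero)+
  then have "x \<notin> set (butlast ps)" "y \<notin> set (tl ps)"
    by (metis distinct_append not_distinct_conv_prefix distinct.simps(2))+
  have swap_edge: "v p q \<le> v (\<sigma> p) (\<sigma> q)" if "p \<noteq> x" "q \<noteq> y" for p q
    using that assms(4-) by (cases "p = y"; cases "q = x") (auto simp: \<sigma>_def)
  have "inj \<sigma>"
    unfolding \<sigma>_def inj_def by auto
  moreover have "ps \<noteq> []"
    using ps(1) by (auto simp: is_path_def)
  ultimately have "is_path A qs x y"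
    using ps(1) assms(2-4) unfolding is_path_def qs_def \<sigma>_def
    by (auto simp: distinct_map hd_map last_map inj_on_subset)
  have "path_strength v ps \<le> path_strength v qs"
  proof (rule path_strength_greatest)
    show "length qs \<ge> 2"
      using ps(1) by (simp add: is_path_def qs_def)
    fix i
    assume i: "Suc i < length qs"
    then have "i < length (butlast ps)" "i < length (tl ps)"
      by (simp_all add: qs_def)
    then have "ps ! i \<in> set (butlast ps)" "ps ! Suc i \<in> set (tl ps)"
      by (metis nth_butlast nth_mem, metis nth_tl nth_mem)
    then have "v (ps ! i) (ps ! Suc i) \<le> v (qs ! i) (qs ! Suc i)"
      using i swap_edge \<open>x \<notin> set (butlast ps)\<close> \<open>y \<notin> set (tl ps)\<close>
      unfolding qs_def by (metis Suc_lessD length_map nth_map)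
    then show "path_strength v ps \<le> v (qs ! i) (qs ! Suc i)"
      using i path_strength_le_edge[of i ps v] by (simp add: qs_def)
  qed
  then show ?thesis
    using ps(2) path_strength_le_path_score[OF assms(1) \<open>is_path A qs x y\<close>, of v] by linarith
qed

lemma ranks_geq_iff:
  "ranks_geq A v a b \<longleftrightarrow>
     (\<exists>xs. is_path A xs a b \<and> successively (\<lambda>p q. path_score A v q p \<le> path_score A v p q) xs)"
  unfolding ranks_geq_def successively_conv_nth ..

lemma successively_path_prepend:
  assumes "is_path A ys b c" "successively Q ys" "Q a b" "a \<in> A" "a \<noteq> c"
  obtains ws where "is_path A ws a c" "successively Q ws"
proof (cases "a \<in> set ys")
  case False
  have "ys \<noteq> []" "hd ys = b"
    using assms(1) by (auto simp: is_path_def)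
  then show ?thesis
    using that[of "a # ys"] assms False by (auto simp: is_path_def successively_Cons)
next
  case True
  then obtain us ws where ys: "ys = us @ a # ws"
    by (meson in_set_conv_decomp)
  have "ws \<noteq> []"
    using assms(1,5) ys by (auto simp: is_path_def)
  then have "is_path A (a # ws) a c"
    using assms(1) ys by (auto simp: is_path_def Suc_le_eq)
  moreover have "successively Q (a # ws)"
    using assms(2) ys by (simp add: successively_append_iff)
  ultimately show ?thesis
    using that by blast
qed

lemma ranks_geq_prepend:
  assumes "ranks_geq A v y z" "path_score A v y x \<le> path_score A v x y" "x \<in> A" "x \<noteq> z"
  shows "ranks_geq A v x z"
proof -
  let ?Q = "\<lambda>p q. path_score A v q p \<le> path_score A v p q"
  obtain ys where ys: "is_path A ys y z" "successively ?Q ys"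
    using assms(1) unfolding ranks_geq_iff by blast
  obtain ws where "is_path A ws x z" "successively ?Q ws"
    using successively_path_prepend[OF ys _ assms(3,4)] assms(2) by blast
  then show ?thesis
    unfolding ranks_geq_iff by blast
qed

lemma path_top_choice_if_beats_path_top_choice:
  assumes "y \<in> path_top_choices A v" "x \<in> A" "x \<noteq> y"
    and "path_score A v y x \<le> path_score A v x y"
  shows "x \<in> path_top_choices A v"
proof -
  have "y \<in> A"
    using assms(1) by (simp add: path_top_choices_def)
  then have "ranks_geq A v x y"
    unfolding ranks_geq_iff using assms(2-4)
    by (intro exI[of _ "[x, y]"]) (simp add: is_path_def)
  moreover have "ranks_geq A v x z" if "z \<in> A" "z \<noteq> x" "z \<noteq> y" for z
  proof (rule ranks_geq_prepend)
    show "ranks_geq A v y z"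
      using assms(1) that unfolding path_top_choices_def by blast
  qed (use assms(2,4) that in simp_all)
  ultimately show ?thesis
    using assms(2) unfolding path_top_choices_def by blast
qed

theorem corollary4p2:
  fixes A :: "'a set" and vs :: "('a \<times> 'a) set list" and x y :: 'a
  assumes "finite A"
    and "length vs \<ge> 1"
    and "\<forall>R \<in> set vs. truncated_ranking A R"
    and "x \<in> A" and "y \<in> A"
    and "pareto_dominates vs x y"
    and "y \<in> path_top_choices A (llull vs)"
  shows "x \<in> path_top_choices A (llull vs)"
proof -
  obtain R where "prefers R x y"
    using assms(6) unfolding pareto_dominates_def by blast
  then have "x \<noteq> y"
    unfolding prefers_def by blast
  have "path_score A (llull vs) y x \<le> path_score A (llull vs) x y"
    using path_score_swap_le[OF assms(1,4,5) \<open>x \<noteq> y\<close> llull_pareto_dominates[OF assms(3,6)]] .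
  then show ?thesis
    by (rule path_top_choice_if_beats_path_top_choice[OF assms(7,4) \<open>x \<noteq> y\<close>])
qed

end
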